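(* Let $n$ be a non-negative integer and $r\in\mathbb{C}\setminus\mathbb{Z}^{-}$, $r\neq0$. Then \[ \sum_{k=1}^{n}(-1)^{k-1}\frac{\binom{n}{k}}{\binom{k+r}{r}}H_k^2=\frac{1}{n+r}(H_{n+r}-H_r)(rH_r-1)+\frac{n}{(n+r)^2}\left(H_r-\frac1r\right)+\frac{r}{n+r}H_nH_{n+r-1}-r\sum_{k=1}^{n}\frac{H_{n-k+r-1}}{k(n-k+r)}. \] In particular, \[ \sum_{k=1}^{n}(-1)^{k-1}\frac{\binom{n}{k}}{k+1}H_k^2=\frac{1}{2(n+1)}\left(3H_n^{(2)}-H_n^2\right). \]
   Context: $\mathbb{Z}^{-}$ denotes the set of negative integers. For complex $z$ not a negative integer, $H_z=\psi(z+1)+\gamma$ ($\psi$ the digamma function, $\gamma$ Euler's constant); for integers $m\ge0$, $H_m=\sum_{j=1}^m1/j$ and $H_m^{(2)}=\sum_{j=1}^m1/j^2$. Binomial coefficients with complex entries: $\binom{x}{y}=\frac{\Gamma(x+1)}{\Gamma(y+1)\Gamma(x-y+1)}$. *)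

theory Defs
  imports "HOL-Analysis.Analysis"
begin

definition Hc :: "complex \<Rightarrow> complex" where
  "Hc z = Digamma (z + 1) + euler_mascheroni"

definition harm2 :: "nat \<Rightarrow> 'a::real_normed_field" where
  "harm2 m = (\<Sum>j=1..m. inverse (of_nat j ^ 2))"

definition cbinom :: "complex \<Rightarrow> complex \<Rightarrow> complex" where
  "cbinom x y = Gamma (x + 1) / (Gamma (y + 1) * Gamma (x - y + 1))"

end

theory Submission
  imports Defs
begin

text \<open>
  Up to sign, the left-hand side is the transform
  T g n = \<Sum>k\<le>n. (-1)^k (n choose k) g(k) / ((k + r) choose k) of g = H^2.
  Summation by parts gives (n + r) T g n = T [(j + r)(g(j) - g(j - 1))] n, and Pascal's rule in n
  gives T [g(j) / j] n = \<Sum>m=1..n. T g m / m when g(0) = 0. Since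
  (j + r)(H_j^2 - H_(j-1)^2) = 2 H_j + 2r H_j / j - 1/j - r/j^2, these two rules reduce T H^2 to the
  transforms of 1, H_j, 1/j and 1/j^2, which they evaluate in the same way. The outcome is matched
  with the closed form by induction on n, using nothing about the generalized harmonic numbers
  but H_(z+1) = H_z + 1/(z + 1). For r = 1 these are the ordinary harmonic numbers, and the
  convolution sum becomes 3/2 (H_n^2 - H_n^(2)) / (n + 1).
\<close>

definition binom_weight :: "'a::field_char_0 \<Rightarrow> nat \<Rightarrow> nat \<Rightarrow> 'a" where
  "binom_weight r n k = (-1) ^ k * of_nat (n choose k) / ((r + of_nat k) gchoose k)"

definition binom_transform :: "'a::field_char_0 \<Rightarrow> (nat \<Rightarrow> 'a) \<Rightarrow> nat \<Rightarrow> 'a" where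
  "binom_transform r g n = (\<Sum>k\<le>n. binom_weight r n k * g k)"

lemma gbinomial_shift_Suc:
  fixes r :: "'a::field_char_0"
  shows "of_nat (Suc k) * ((r + of_nat (Suc k)) gchoose Suc k) =
    (r + of_nat (Suc k)) * ((r + of_nat k) gchoose k)"
  using gbinomial_absorption[of k "r + of_nat (Suc k)"] by (simp add: algebra_simps)

lemma of_nat_plus_nonzero:
  fixes r :: "'a::field_char_0"
  assumes "r \<notin> \<int>\<^sub>\<le>\<^sub>0"
  shows "of_nat m + r \<noteq> 0"
  using assms plus_of_nat_eq_0_imp by (metis add.commute)

lemma gbinomial_shift_nonzero:
  fixes r :: "'a::field_char_0"
  assumes "r \<notin> \<int>\<^sub>\<le>\<^sub>0"
  shows "(r + of_nat k) gchoose k \<noteq> 0"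
proof (induction k)
  case (Suc k)
  have "r + of_nat (Suc k) \<noteq> 0"
    using of_nat_plus_nonzero[OF assms] by (metis add.commute)
  with Suc.IH show ?case
    using gbinomial_shift_Suc[of k r] by (metis mult_eq_0_iff of_nat_neq_0)
qed simp

lemma binom_weight_Suc:
  fixes r :: "'a::field_char_0"
  assumes "r \<notin> \<int>\<^sub>\<le>\<^sub>0"
  shows "(of_nat (Suc k) + r) * binom_weight r n (Suc k) = - of_nat (n - k) * binom_weight r n k"
proof -
  define B where "B = (r + of_nat k) gchoose k"
  define s :: 'a where "s = of_nat (Suc k)"
  have nz: "B \<noteq> 0" "s + r \<noteq> 0" "s \<noteq> 0"
    unfolding B_def s_def
    by (fact gbinomial_shift_nonzero[OF assms] of_nat_plus_nonzero[OF assms] of_nat_neq_0)+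
  have B_Suc: "(r + s) gchoose Suc k = (s + r) * B / s"
    using gbinomial_shift_Suc[of k r] nz(3) unfolding B_def s_def
    by (simp add: field_simps add.commute del: of_nat_Suc)
  have "(s + r) * binom_weight r n (Suc k) = - ((-1) ^ k * (s * of_nat (n choose Suc k)) / B)"
    using nz unfolding binom_weight_def s_def[symmetric] B_Suc by (simp add: divide_simps)
  also have "s * of_nat (n choose Suc k) = of_nat (n - k) * of_nat (n choose k)"
    unfolding s_def by (metis binomial_absorb_comp binomial_absorption of_nat_mult)
  finally show ?thesis
    unfolding binom_weight_def s_def B_def by simp
qed

lemma binom_weight_Suc_left:
  fixes r :: "'a::field_char_0"
  shows "of_nat (Suc n) * (binom_weight r (Suc n) k - binom_weight r n k) =
    of_nat k * binom_weight r (Suc n) k"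
proof -
  define x where "x = (-1) ^ k / ((r + of_nat k) gchoose k :: 'a)"
  have w: "binom_weight r m k = x * of_nat (m choose k)" for m
    unfolding binom_weight_def x_def by simp
  have choose: "of_nat (Suc n) * (of_nat (Suc n choose k) - of_nat (n choose k)) =
      (of_nat k * of_nat (Suc n choose k) :: 'a)"
  proof (cases k)
    case (Suc i)
    have "Suc n * (n choose i) = (Suc n choose Suc i) * Suc i"
      by (rule Suc_times_binomial_eq)
    then show ?thesis
      unfolding Suc binomial_Suc_Suc by (simp add: algebra_simps flip: of_nat_mult of_nat_add)
  qed simp
  show ?thesis
    unfolding w using arg_cong[OF choose, of "(*) x"] by (simp add: algebra_simps)
qed

lemma binom_transform_add:
  "binom_transform r (\<lambda>j. f j + g j) n = binom_transform r f n + binom_transform r g n"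
  unfolding binom_transform_def by (simp add: distrib_left sum.distrib)

lemma binom_transform_diff:
  "binom_transform r (\<lambda>j. f j - g j) n = binom_transform r f n - binom_transform r g n"
  unfolding binom_transform_def by (simp add: right_diff_distrib sum_subtractf)

lemma binom_transform_scale: "binom_transform r (\<lambda>j. c * f j) n = c * binom_transform r f n"
  unfolding binom_transform_def by (simp add: sum_distrib_left mult_ac)

lemma binom_transform_cong:
  "(\<And>j. j \<le> n \<Longrightarrow> f j = g j) \<Longrightarrow> binom_transform r f n = binom_transform r g n"
  unfolding binom_transform_def by (rule sum.cong) auto

lemma sum_alternating_eq_binom_transform:
  fixes r :: "'a::field_char_0"
  assumes "g 0 = 0"
  shows "(\<Sum>k=1..n. (-1) ^ (k - 1) * of_nat (n choose k) / ((r + of_nat k) gchoose k) * g k) =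
    - binom_transform r g n"
proof -
  have "binom_transform r g n = (\<Sum>k=1..n. binom_weight r n k * g k)"
    unfolding binom_transform_def atMost_atLeast0 using assms by (simp add: sum.atLeast_Suc_atMost)
  also have "\<dots> = - (\<Sum>k=1..n. (-1) ^ (k - 1) * of_nat (n choose k) / ((r + of_nat k) gchoose k) * g k)"
    unfolding sum_negf[symmetric] by (rule sum.cong) (auto simp: binom_weight_def power_eq_if)
  finally show ?thesis
    by simp
qed

lemma binom_transform_summation_by_parts:
  fixes r :: "'a::field_char_0"
  assumes "r \<notin> \<int>\<^sub>\<le>\<^sub>0"
  shows "(of_nat n + r) * binom_transform r g n =
    binom_transform r (\<lambda>j. (of_nat j + r) * (g j - (if j = 0 then 0 else g (j - 1)))) n"
proof -
  define w where "w = binom_weight r n"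
  have split: "(of_nat n + r) * binom_transform r g n =
      (\<Sum>k\<le>n. w k * (of_nat k + r) * g k) + (\<Sum>k\<le>n. w k * of_nat (n - k) * g k)"
    unfolding binom_transform_def w_def sum_distrib_left sum.distrib[symmetric]
    by (rule sum.cong) (simp_all add: of_nat_diff algebra_simps)
  have "(\<Sum>k\<le>n. w k * (of_nat k + r) * (if k = 0 then 0 else g (k - 1))) =
      (\<Sum>i<n. w (Suc i) * (of_nat (Suc i) + r) * g i)"
    unfolding lessThan_Suc_atMost[symmetric] sum.lessThan_Suc_shift by simp
  also have "\<dots> = - (\<Sum>i<n. w i * of_nat (n - i) * g i)"
  proof -
    have "w (Suc i) * (of_nat (Suc i) + r) = - (w i * of_nat (n - i))" for i
      using binom_weight_Suc[OF assms, of i n] unfolding w_def by (simp add: mult.commute)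
    then show ?thesis
      by (simp add: sum_negf[symmetric])
  qed
  also have "(\<Sum>i<n. w i * of_nat (n - i) * g i) = (\<Sum>k\<le>n. w k * of_nat (n - k) * g k)"
    unfolding lessThan_Suc_atMost[symmetric] by simp
  finally have shifted: "(\<Sum>k\<le>n. w k * (of_nat k + r) * (if k = 0 then 0 else g (k - 1))) =
      - (\<Sum>k\<le>n. w k * of_nat (n - k) * g k)" .
  have "binom_transform r (\<lambda>j. (of_nat j + r) * (g j - (if j = 0 then 0 else g (j - 1)))) n =
      (\<Sum>k\<le>n. w k * (of_nat k + r) * g k) -
      (\<Sum>k\<le>n. w k * (of_nat k + r) * (if k = 0 then 0 else g (k - 1)))"
    unfolding binom_transform_def w_def sum_subtractf[symmetric]
    by (rule sum.cong) (simp_all add: algebra_simps)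
  then show ?thesis
    unfolding split shifted by simp
qed

lemma binom_transform_divide_index:
  fixes r :: "'a::field_char_0"
  assumes "g 0 = 0"
  shows "binom_transform r (\<lambda>j. g j / of_nat j) n = (\<Sum>m=1..n. binom_transform r g m / of_nat m)"
proof (induction n)
  case (Suc n)
  have "binom_transform r (\<lambda>j. g j / of_nat j) (Suc n) - binom_transform r (\<lambda>j. g j / of_nat j) n =
      (\<Sum>k\<le>Suc n. (binom_weight r (Suc n) k - binom_weight r n k) * (g k / of_nat k))"
  proof -
    have extend: "binom_transform r f n = (\<Sum>k\<le>Suc n. binom_weight r n k * f k)" for f
      by (simp add: binom_transform_def binom_weight_def)
    show ?thesis
      unfolding extend binom_transform_def[of r _ "Suc n"] sum_subtractf[symmetric] left_diff_distrib ..
  qed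
  also have "\<dots> = binom_transform r g (Suc n) / of_nat (Suc n)"
    unfolding binom_transform_def sum_divide_distrib
  proof (rule sum.cong)
    fix k
    have "binom_weight r (Suc n) k - binom_weight r n k =
        of_nat k * binom_weight r (Suc n) k / of_nat (Suc n)"
      using binom_weight_Suc_left[of n r k] by (simp add: field_simps del: of_nat_Suc)
    then show "(binom_weight r (Suc n) k - binom_weight r n k) * (g k / of_nat k) =
        binom_weight r (Suc n) k * g k / of_nat (Suc n)"
      using assms by (cases "k = 0") simp_all
  qed simp
  finally show ?case
    using Suc.IH by (simp add: algebra_simps)
qed (simp add: binom_transform_def binom_weight_def assms)

lemma binom_transform_indicator_zero: "binom_transform r (\<lambda>j. if j = 0 then c else 0) n = c"
  by (simp add: binom_transform_def binom_weight_def if_distrib[of "(*) _"] sum.delta cong: if_cong)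

lemma binom_transform_one:
  fixes r :: "'a::field_char_0"
  assumes "r \<notin> \<int>\<^sub>\<le>\<^sub>0"
  shows "binom_transform r (\<lambda>_. 1) n = r / (of_nat n + r)"
proof -
  have "(of_nat n + r) * binom_transform r (\<lambda>_. 1) n =
      binom_transform r (\<lambda>j. if j = 0 then r else 0) n"
    unfolding binom_transform_summation_by_parts[OF assms] by (rule binom_transform_cong) simp
  then show ?thesis
    using of_nat_plus_nonzero[OF assms, of n] by (simp add: binom_transform_indicator_zero field_simps)
qed

lemma binom_transform_indicator_pos:
  fixes r :: "'a::field_char_0"
  assumes "r \<notin> \<int>\<^sub>\<le>\<^sub>0"
  shows "binom_transform r (\<lambda>j. if j = 0 then 0 else 1) n = - of_nat n / (of_nat n + r)"
proof -
  have "binom_transform r (\<lambda>j. if j = 0 then 0 else 1) n =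
      binom_transform r (\<lambda>j. 1 - (if j = 0 then 1 else 0)) n"
    by (rule binom_transform_cong) simp
  also have "\<dots> = r / (of_nat n + r) - 1"
    unfolding binom_transform_diff binom_transform_one[OF assms] binom_transform_indicator_zero ..
  also have "\<dots> = - of_nat n / (of_nat n + r)"
    using of_nat_plus_nonzero[OF assms, of n] by (simp add: field_simps)
  finally show ?thesis .
qed

definition shifted_harm :: "'a::field_char_0 \<Rightarrow> nat \<Rightarrow> 'a" where
  "shifted_harm r n = (\<Sum>m=1..n. 1 / (of_nat m + r))"

lemma binom_transform_inverse:
  fixes r :: "'a::field_char_0"
  assumes "r \<notin> \<int>\<^sub>\<le>\<^sub>0"
  shows "binom_transform r (\<lambda>j. 1 / of_nat j) n = - shifted_harm r n"
proof -
  have "binom_transform r (\<lambda>j. 1 / of_nat j) n =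
      binom_transform r (\<lambda>j. (if j = 0 then 0 else 1) / of_nat j) n"
    by (rule binom_transform_cong) simp
  also have "\<dots> = (\<Sum>m=1..n. - of_nat m / (of_nat m + r) / of_nat m)"
    by (simp add: binom_transform_divide_index binom_transform_indicator_pos[OF assms])
  also have "\<dots> = - shifted_harm r n"
    unfolding shifted_harm_def sum_negf[symmetric] by (rule sum.cong) auto
  finally show ?thesis .
qed

lemma binom_transform_harm:
  fixes r :: "'a::real_normed_field"
  assumes "r \<notin> \<int>\<^sub>\<le>\<^sub>0"
  shows "binom_transform r harm n =
    (- of_nat n / (of_nat n + r) - r * shifted_harm r n) / (of_nat n + r)"
proof -
  have "(of_nat j + r) * (harm j - (if j = 0 then 0 else harm (j - 1))) =
      (if j = 0 then 0 else 1) + r * (1 / of_nat j)" for j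
    by (cases j) (simp_all add: harm_expand(1) harm_Suc field_simps del: of_nat_Suc)
  then have "(of_nat n + r) * binom_transform r harm n =
      binom_transform r (\<lambda>j. (if j = 0 then 0 else 1) + r * (1 / of_nat j)) n"
    unfolding binom_transform_summation_by_parts[OF assms] by presburger
  also have "\<dots> = - of_nat n / (of_nat n + r) - r * shifted_harm r n"
    unfolding binom_transform_add binom_transform_scale binom_transform_indicator_pos[OF assms]
      binom_transform_inverse[OF assms] by simp
  finally show ?thesis
    using of_nat_plus_nonzero[OF assms, of n] by (simp add: nonzero_eq_divide_eq mult.commute)
qed

lemma binom_transform_inverse_square:
  fixes r :: "'a::field_char_0"
  assumes "r \<notin> \<int>\<^sub>\<le>\<^sub>0"
  shows "binom_transform r (\<lambda>j. 1 / of_nat j ^ 2) n = - (\<Sum>m=1..n. shifted_harm r m / of_nat m)"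
proof -
  have "binom_transform r (\<lambda>j. 1 / of_nat j ^ 2) n =
      binom_transform r (\<lambda>j. (1 / of_nat j) / of_nat j) n"
    by (rule binom_transform_cong) (simp add: power2_eq_square)
  also have "\<dots> = (\<Sum>m=1..n. binom_transform r (\<lambda>j. 1 / of_nat j) m / of_nat m)"
    by (rule binom_transform_divide_index) simp
  finally show ?thesis
    by (simp add: binom_transform_inverse[OF assms] sum_negf)
qed

lemma binom_transform_harm_squared_reduction:
  fixes r :: "'a::real_normed_field"
  assumes "r \<notin> \<int>\<^sub>\<le>\<^sub>0"
  shows "(of_nat n + r) * binom_transform r (\<lambda>j. harm j ^ 2) n =
    2 * binom_transform r harm n + 2 * r * (\<Sum>m=1..n. binom_transform r harm m / of_nat m)
    + shifted_harm r n + r * (\<Sum>m=1..n. shifted_harm r m / of_nat m)"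
proof -
  have "(of_nat j + r) * (harm j ^ 2 - (if j = 0 then 0 else harm (j - 1) ^ 2)) =
      2 * harm j + 2 * r * (harm j / of_nat j) - 1 / of_nat j - r * (1 / of_nat j ^ 2)" for j
    by (cases j) (simp_all add: harm_expand(1) harm_Suc field_simps power2_eq_square del: of_nat_Suc)
  then have "(of_nat n + r) * binom_transform r (\<lambda>j. harm j ^ 2) n = binom_transform r
      (\<lambda>j. 2 * harm j + 2 * r * (harm j / of_nat j) - 1 / of_nat j - r * (1 / of_nat j ^ 2)) n"
    unfolding binom_transform_summation_by_parts[OF assms] by presburger
  then show ?thesis
    unfolding binom_transform_add binom_transform_diff binom_transform_scale
      binom_transform_divide_index[of harm, OF harm_expand(1)] binom_transform_inverse[OF assms]
      binom_transform_inverse_square[OF assms] by simp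
qed

lemma sum_partial_fractions:
  fixes r :: "'a::field_char_0"
  assumes "r \<notin> \<int>\<^sub>\<le>\<^sub>0"
  shows "(of_nat n + r) * (\<Sum>k=1..n. f (n - k) / (of_nat k * (of_nat (n - k) + r))) =
    (\<Sum>k=1..n. f (n - k) / of_nat k) + (\<Sum>j<n. f j / (of_nat j + r))"
proof -
  have "(of_nat n + r) * (f (n - k) / (of_nat k * (of_nat (n - k) + r))) =
      f (n - k) / of_nat k + f (n - k) / (of_nat (n - k) + r)" if "k \<in> {1..n}" for k
  proof -
    have "of_nat k \<noteq> (0::'a)" "of_nat (n - k) + r \<noteq> 0"
      using that of_nat_plus_nonzero[OF assms, of "n - k"] by simp_all
    moreover have "of_nat n + r = of_nat k + (of_nat (n - k) + r)"
      using that by (simp add: of_nat_diff)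
    ultimately show ?thesis
      by (simp add: field_simps)
  qed
  moreover have "(\<Sum>k=1..n. f (n - k) / (of_nat (n - k) + r)) = (\<Sum>j<n. f j / (of_nat j + r))"
    using sum.atLeastLessThan_rev_at_least_Suc_atMost[of "\<lambda>j. f j / (of_nat j + r)" 0 n]
    by (simp add: atLeast0LessThan)
  ultimately show ?thesis
    by (simp add: sum_distrib_left sum.distrib)
qed

text \<open>
  K m plays the role of H_(m + r - 1), and harm_convolution n is the sum
  \<Sum>k=1..n. H_(n - k + r - 1) / (k (n - k + r)) of the closed form.
\<close>

locale shifted_harmonic =
  fixes r :: "'a::real_normed_field" and K :: "nat \<Rightarrow> 'a"
  assumes not_nonpos_int: "r \<notin> \<int>\<^sub>\<le>\<^sub>0"
    and K_Suc: "K (Suc m) = K m + 1 / (r + of_nat m)"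
begin

lemma K_telescope: "(\<Sum>j<n. 1 / (of_nat j + r)) = K n - K 0"
  by (induction n) (simp_all add: K_Suc add.commute)

lemma shifted_harm_eq: "shifted_harm r m = K (Suc m) - K 1"
  by (induction m) (simp_all add: shifted_harm_def K_Suc add.commute)

definition harm_convolution :: "nat \<Rightarrow> 'a" where
  "harm_convolution n = (\<Sum>k=1..n. K (n - k) / (of_nat k * (of_nat (n - k) + r)))"

lemma harm_convolution_Suc:
  "(of_nat (Suc n) + r) * harm_convolution (Suc n) =
    (of_nat n + r) * harm_convolution n + K 0 / of_nat (Suc n)
      + (harm n + 2 * K n - K 0) / (of_nat n + r)"
proof -
  have "(\<Sum>k=1..Suc n. K (Suc n - k) / of_nat k) =
      (\<Sum>k=1..n. K (n - k) / of_nat k) + (\<Sum>k=1..n. 1 / (of_nat k * (of_nat (n - k) + r)))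
        + K 0 / of_nat (Suc n)"
  proof -
    have "K (Suc n - k) / of_nat k = K (n - k) / of_nat k + 1 / (of_nat k * (of_nat (n - k) + r))"
      if "k \<le> n" for k
      using that by (simp add: Suc_diff_le K_Suc add_divide_distrib add.commute)
    then show ?thesis
      by (simp add: sum.distrib)
  qed
  moreover have "(of_nat n + r) * (\<Sum>k=1..n. 1 / (of_nat k * (of_nat (n - k) + r))) =
      harm n + (K n - K 0)"
    using sum_partial_fractions[OF not_nonpos_int, of n "\<lambda>_. 1"]
    by (simp add: K_telescope harm_def inverse_eq_divide)
  ultimately show ?thesis
    using of_nat_plus_nonzero[OF not_nonpos_int, of n]
    unfolding harm_convolution_def sum_partial_fractions[OF not_nonpos_int]
    by (simp add: field_simps)
qed

lemma binom_transform_harm_squared_scaled: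
  "(of_nat n + r) * binom_transform r (\<lambda>j. harm j ^ 2) n =
    - ((K (Suc n) - K 1) * (r * K 1 - 1) + of_nat n / (of_nat n + r) * (K 1 - 1 / r)
       + r * harm n * K n - r * ((of_nat n + r) * harm_convolution n))"
  (is "?L n = ?R n")
proof (induction n)
  case 0
  then show ?case
    by (simp add: binom_transform_def binom_weight_def harm_convolution_def harm_expand(1) K_Suc)
next
  case (Suc n)
  \<comment> \<open>Naming the reciprocals turns the increment into a polynomial identity modulo \<open>inverses\<close>.\<close>
  define T where "T = binom_transform r harm"
  define x :: 'a where "x = of_nat n"
  define a where "a = 1 / r"
  define b where "b = 1 / (x + r)"
  define c where "c = 1 / (x + 1 + r)"
  define d where "d = 1 / (x + 1)"
  have inverses: "r * a = 1" "(x + r) * b = 1" "(x + 1 + r) * c = 1" "(x + 1) * d = 1"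
    using of_nat_plus_nonzero[OF not_nonpos_int, of 0] of_nat_plus_nonzero[OF not_nonpos_int, of n]
      of_nat_plus_nonzero[OF not_nonpos_int, of "Suc n"] of_nat_neq_0[of n, where 'a='a]
    by (simp_all add: a_def b_def c_def d_def x_def add_ac)
  have K_values: "K 1 = K 0 + a" "K (Suc n) = K n + b" "K (Suc (Suc n)) = K n + b + c"
    using K_Suc[of 0] K_Suc[of n] K_Suc[of "Suc n"]
    by (simp_all add: a_def b_def c_def x_def add_ac)
  have T_values: "T n = (- x * b - r * (K n + b - (K 0 + a))) * b"
      "T (Suc n) = (- (x + 1) * c - r * (K n + b + c - (K 0 + a))) * c"
    unfolding T_def binom_transform_harm[OF not_nonpos_int] shifted_harm_eq K_values
    by (simp_all add: b_def c_def x_def divide_inverse add_ac)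
  let ?step = "2 * (T (Suc n) - T n) + 2 * r * T (Suc n) * d + c + r * (K n + b + c - (K 0 + a)) * d"
  have "?L (Suc n) = ?L n + ?step"
    unfolding binom_transform_harm_squared_reduction[OF not_nonpos_int] T_def[symmetric]
      shifted_harm_eq K_values
    by (simp add: d_def x_def divide_inverse algebra_simps K_values)
  also have "\<dots> = ?R n + ?step"
    unfolding Suc.IH ..
  also have "\<dots> = ?R (Suc n)"
  proof -
    have step: "?step =
        - (c * (r * (K 0 + a) - 1) + ((x + 1) * c - x * b) * K 0
           + r * ((harm n + d) * (K n + b) - harm n * K n)
           - r * (K 0 * d + (harm n + 2 * K n - K 0) * b))"
      using inverses unfolding T_values by algebra
    have convolution: "(of_nat (Suc n) + r) * harm_convolution (Suc n) =
        (of_nat n + r) * harm_convolution n + K 0 * d + (harm n + 2 * K n - K 0) * b"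
      unfolding harm_convolution_Suc by (simp add: b_def d_def x_def divide_inverse add_ac)
    have "harm (Suc n) = harm n + d" "of_nat (Suc n) / (of_nat (Suc n) + r) = (x + 1) * c"
        "of_nat n / (of_nat n + r) = x * b" "1 / r = a"
      by (simp_all add: harm_Suc a_def b_def c_def d_def x_def divide_inverse add_ac)
    then show ?thesis
      unfolding step K_values convolution by (simp add: algebra_simps)
  qed
  finally show ?case .
qed

lemma binom_transform_harm_squared:
  "binom_transform r (\<lambda>j. harm j ^ 2) n =
    - (1 / (of_nat n + r) * (K (Suc n) - K 1) * (r * K 1 - 1)
       + of_nat n / (of_nat n + r) ^ 2 * (K 1 - 1 / r)
       + r / (of_nat n + r) * harm n * K n - r * harm_convolution n)"
proof -
  have "(of_nat n + r) * inverse (of_nat n + r) = 1"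
    using of_nat_plus_nonzero[OF not_nonpos_int, of n] by simp
  moreover have "K 1 - 1 / r = K 0"
    using K_Suc[of 0] by simp
  moreover note binom_transform_harm_squared_scaled[of n]
  ultimately show ?thesis
    unfolding divide_inverse power_inverse[symmetric] by algebra
qed

end

interpretation harm_one: shifted_harmonic "1 :: real" harm
  by unfold_locales (simp_all add: harm_Suc inverse_eq_divide add.commute)

lemma harm_one_convolution:
  "(real n + 1) * harm_one.harm_convolution n = 3 / 2 * (harm n ^ 2 - harm2 n)"
proof (induction n)
  case 0
  then show ?case
    by (simp add: harm_one.harm_convolution_def harm2_def harm_expand(1))
next
  case (Suc n)
  define d where "d = inverse (real n + 1)"
  have "(real (Suc n) + 1) * harm_one.harm_convolution (Suc n) =
      (real n + 1) * harm_one.harm_convolution n + 3 * harm n * d"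
    using harm_one.harm_convolution_Suc[of n] by (simp add: d_def harm_expand(1) divide_inverse add_ac)
  also have "\<dots> = 3 / 2 * ((harm n + d) ^ 2 - (harm2 n + d ^ 2))"
    unfolding Suc.IH by (simp add: algebra_simps power2_eq_square)
  finally show ?case
    by (simp add: d_def harm_Suc harm2_def power_inverse add_ac)
qed

theorem sum_harm_squared_over_Suc:
  "(\<Sum>k=1..n. (-1) ^ (k - 1) * real (n choose k) / (real k + 1) * harm k ^ 2) =
    1 / (2 * (real n + 1)) * (3 * harm2 n - harm n ^ 2)"
proof -
  have "(1 + real k) gchoose k = real k + 1" for k
    by (metis binomial_Suc_n binomial_gbinomial of_nat_Suc add.commute)
  then have "(\<Sum>k=1..n. (-1) ^ (k - 1) * real (n choose k) / (real k + 1) * harm k ^ 2) =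
      - binom_transform 1 (\<lambda>j. harm j ^ 2) n"
    using sum_alternating_eq_binom_transform[where g = "\<lambda>j. harm j ^ 2" and r = "1::real"]
    by (simp add: harm_expand(1))
  moreover have "(real n + 1) * binom_transform 1 (\<lambda>j. harm j ^ 2) n =
      - (harm n ^ 2 - 3 / 2 * (harm n ^ 2 - harm2 n))"
    using harm_one.binom_transform_harm_squared_scaled[of n] harm_one_convolution[of n]
    by (simp add: harm_expand(2) power2_eq_square)
  ultimately show ?thesis
    by (simp add: field_simps)
qed

lemma Hc_plus_one: "z + 1 \<noteq> 0 \<Longrightarrow> Hc (z + 1) = Hc z + 1 / (z + 1)"
  unfolding Hc_def using Digamma_plus1[of "z + 1"] by (simp add: add_ac)

lemma cbinom_eq_gbinomial:
  assumes "r \<notin> \<int>\<^sub>\<le>\<^sub>0"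
  shows "cbinom (of_nat k + r) r = (r + of_nat k) gchoose k"
proof -
  have "r + of_nat k + 1 \<notin> \<int>\<^sub>\<le>\<^sub>0"
    using assms nonpos_Ints_diff_Nats[of "r + of_nat k + 1" "of_nat (Suc k)"] by auto
  from gbinomial_Gamma[OF this] show ?thesis
    unfolding cbinom_def using Gamma_fact[of k, where 'a = complex]
    by (simp add: add_ac mult.commute)
qed

theorem sum_harm_squared_over_cbinom:
  fixes r :: complex
  assumes r: "r \<notin> \<int>\<^sub>\<le>\<^sub>0"
  shows "(\<Sum>k=1..n. (-1) ^ (k - 1) * of_nat (n choose k) / cbinom (of_nat k + r) r * harm k ^ 2)
    = 1 / (of_nat n + r) * (Hc (of_nat n + r) - Hc r) * (r * Hc r - 1)
      + of_nat n / (of_nat n + r) ^ 2 * (Hc r - 1 / r)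
      + r / (of_nat n + r) * harm n * Hc (of_nat n + r - 1)
      - r * (\<Sum>k=1..n. Hc (of_nat n - of_nat k + r - 1) / (of_nat k * (of_nat n - of_nat k + r)))"
proof -
  define K where "K m = Hc (r - 1 + of_nat m)" for m
  interpret shifted_harmonic r K
  proof
    fix m
    have "r - 1 + of_nat m + 1 \<noteq> 0"
      using of_nat_plus_nonzero[OF r, of m] by (simp add: add.commute)
    then show "K (Suc m) = K m + 1 / (r + of_nat m)"
      unfolding K_def using Hc_plus_one[of "r - 1 + of_nat m"] by (simp add: add_ac)
  qed (fact r)
  have K_values: "Hc (of_nat n + r) = K (Suc n)" "Hc r = K 1" "Hc (of_nat n + r - 1) = K n"
    by (simp_all add: K_def algebra_simps)
  have convolution:
    "(\<Sum>k=1..n. Hc (of_nat n - of_nat k + r - 1) / (of_nat k * (of_nat n - of_nat k + r))) =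
      harm_convolution n"
    unfolding harm_convolution_def K_def
    by (rule sum.cong) (simp_all add: of_nat_diff algebra_simps)
  have lhs: "(\<Sum>k=1..n. (-1) ^ (k - 1) * of_nat (n choose k) / cbinom (of_nat k + r) r * harm k ^ 2) =
      - binom_transform r (\<lambda>j. harm j ^ 2) n"
    unfolding cbinom_eq_gbinomial[OF r]
    by (rule sum_alternating_eq_binom_transform) (simp add: harm_expand(1))
  show ?thesis
    unfolding lhs convolution K_values binom_transform_harm_squared by simp
qed

theorem corollary12:
  fixes n :: nat and r :: complex
  assumes "r \<notin> {- of_nat m | m. m \<ge> 1}" and "r \<noteq> 0"
  shows "((\<Sum>k=1..n. (-1) ^ (k - 1) * of_nat (n choose k) / cbinom (of_nat k + r) r
            * (harm k :: complex) ^ 2)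
         = 1 / (of_nat n + r) * (Hc (of_nat n + r) - Hc r) * (r * Hc r - 1)
           + of_nat n / (of_nat n + r) ^ 2 * (Hc r - 1 / r)
           + r / (of_nat n + r) * harm n * Hc (of_nat n + r - 1)
           - r * (\<Sum>k=1..n. Hc (of_nat n - of_nat k + r - 1) / (of_nat k * (of_nat n - of_nat k + r))))
    \<and> ((\<Sum>k=1..n. (-1) ^ (k - 1) * real (n choose k) / (real k + 1) * (harm k :: real) ^ 2)
         = 1 / (2 * (real n + 1)) * (3 * harm2 n - (harm n) ^ 2))"
proof -
  have "r \<notin> \<int>\<^sub>\<le>\<^sub>0"
  proof
    assume "r \<in> \<int>\<^sub>\<le>\<^sub>0"
    then obtain m where m: "r = - of_nat m"
      by (rule nonpos_Ints_cases')
    with assms(2) have "m \<ge> 1"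
      by (cases m) auto
    with m assms(1) show False
      by blast
  qed
  then show ?thesis
    using sum_harm_squared_over_cbinom sum_harm_squared_over_Suc by blast
qed

end
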